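(* Let $r\ge1$ and $n\ge1$ be integers, let $A\subset\{0,1\}^n$ have density $\alpha$ inside $\{0,1\}^n$ and let $B\subset\{0,\dots,r\}^n$ have density $\beta$ inside $\{0,\dots,r\}^n$. Then the sumset $A+B=\{a+b:a\in A,b\in B\}$ (addition in $\mathbb{Z}^n$) has density at least $\alpha\beta$ inside $\{0,\dots,r+1\}^n$.
   Context: The density of a subset $X$ of a finite set $Y$ inside $Y$ is $|X|/|Y|$. *)

theory Defs
  imports Complex_Main
begin

text \<open>Points of Z^n are modelled as functions nat => int that vanish outside {..<n}.
  grid n m is the box {0,...,m}^n.\<close>
definition grid :: "nat \<Rightarrow> int \<Rightarrow> (nat \<Rightarrow> int) set" where
  "grid n m = {x. (\<forall>i<n. 0 \<le> x i \<and> x i \<le> m) \<and> (\<forall>i\<ge>n. x i = 0)}"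

definition density :: "'a set \<Rightarrow> 'a set \<Rightarrow> real" where
  "density X Y = real (card X) / real (card Y)"

definition sumset :: "(nat \<Rightarrow> int) set \<Rightarrow> (nat \<Rightarrow> int) set \<Rightarrow> (nat \<Rightarrow> int) set" where
  "sumset A B = {(\<lambda>i. a i + b i) | a b. a \<in> A \<and> b \<in> B}"

end

(* Induction on n, slicing along the last coordinate. Let a_0, a_1, b_k, c_k be the sizes of
   the slices of A, B and A + B at height 0, 1 and k. Since the slices of A + B contain the
   sumsets of slices, the induction hypothesis gives c_k >= t a_0 b_k and c_(k+1) >= t a_1 b_k
   for one common factor t. Splitting the heights at any j <= r yields
   sum c >= t (a_0 sum_(k<=j) b_k + a_1 sum_(k>=j) b_k); averaging over j with weights b_j gives
   2 S sum c >= t (a_0 + a_1) (S^2 + Q), where S = sum b_k and Q = sum b_k^2, and Cauchy-Schwarz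
   S^2 <= (r + 1) Q turns this into sum c >= t (a_0 + a_1) S (r + 2) / (2 (r + 1)).
   So each coordinate contributes the factor (r + 2) / (2 (r + 1)), which is exactly the ratio
   of the box sizes in the density statement. *)

theory Submission
  imports Defs "HOL-Analysis.Convex"
begin

lemma sum_split_at_threshold:
  fixes b :: "nat \<Rightarrow> 'a::comm_monoid_add"
  assumes "j \<le> r"
  shows "(\<Sum>k\<le>j. b k) + (\<Sum>k=j..r. b k) = (\<Sum>k\<le>r. b k) + b j"
proof -
  have "{..r} = {..<j} \<union> {j..r}" using assms by auto
  then have "(\<Sum>k\<le>r. b k) = (\<Sum>k<j. b k) + (\<Sum>k=j..r. b k)"
    by (simp only:) (rule sum.union_disjoint, auto)
  moreover have "(\<Sum>k\<le>j. b k) = (\<Sum>k<j. b k) + b j"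
    by (simp flip: lessThan_Suc_atMost)
  ultimately show ?thesis by (simp add: add_ac)
qed

lemma two_times_sum_mult_partial_sums:
  fixes b :: "nat \<Rightarrow> 'a::comm_ring_1"
  shows "2 * (\<Sum>j\<le>r. b j * (\<Sum>k\<le>j. b k)) = (\<Sum>k\<le>r. b k)\<^sup>2 + (\<Sum>k\<le>r. (b k)\<^sup>2)"
  by (induction r) (simp_all add: power2_eq_square algebra_simps)

lemma two_times_sum_mult_tail_sums:
  fixes b :: "nat \<Rightarrow> 'a::comm_ring_1"
  shows "2 * (\<Sum>j\<le>r. b j * (\<Sum>k=j..r. b k)) = (\<Sum>k\<le>r. b k)\<^sup>2 + (\<Sum>k\<le>r. (b k)\<^sup>2)"
    (is "2 * ?tails = ?T")
proof -
  have "(\<Sum>j\<le>r. b j * (\<Sum>k\<le>j. b k)) + ?tails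
      = (\<Sum>j\<le>r. b j * ((\<Sum>k\<le>j. b k) + (\<Sum>k=j..r. b k)))"
    by (simp add: sum.distrib distrib_left)
  also have "\<dots> = (\<Sum>j\<le>r. b j * (\<Sum>k\<le>r. b k) + b j * b j)"
    by (rule sum.cong) (simp_all add: sum_split_at_threshold distrib_left)
  also have "\<dots> = ?T"
    by (simp add: sum.distrib power2_eq_square flip: sum_distrib_right)
  finally have partial_plus_tails: "(\<Sum>j\<le>r. b j * (\<Sum>k\<le>j. b k)) + ?tails = ?T" .
  have cancel: "2 * t = T" if "2 * p = T" and "p + t = T" for p t T :: 'a
  proof -
    have "2 * t = 2 * (p + t) - 2 * p" by (simp add: algebra_simps)
    also have "\<dots> = T" using that by simp
    finally show ?thesis .
  qed
  show ?thesis
    using two_times_sum_mult_partial_sums partial_plus_tails by (rule cancel)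
qed

lemma prefix_tail_combination_le_sum:
  fixes a0 a1 :: real and b c :: "nat \<Rightarrow> real"
  assumes "\<forall>k\<le>r. a0 * b k \<le> c k" and "\<forall>k\<le>r. a1 * b k \<le> c (Suc k)" and "j \<le> r"
  shows "a0 * (\<Sum>k\<le>j. b k) + a1 * (\<Sum>k=j..r. b k) \<le> (\<Sum>k\<le>Suc r. c k)"
proof -
  have "a0 * (\<Sum>k\<le>j. b k) \<le> (\<Sum>k\<le>j. c k)"
    using assms(1,3) by (auto simp: sum_distrib_left intro!: sum_mono)
  moreover have "a1 * (\<Sum>k=j..r. b k) \<le> (\<Sum>k=j..r. c (Suc k))"
    using assms(2,3) by (auto simp: sum_distrib_left intro!: sum_mono)
  moreover have "(\<Sum>k\<le>Suc r. c k) = (\<Sum>k\<le>j. c k) + (\<Sum>k=j..r. c (Suc k))"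
  proof -
    have "Suc r = j + (Suc r - j)" using assms(3) by simp
    then have "(\<Sum>k\<le>Suc r. c k) = (\<Sum>k\<le>j. c k) + (\<Sum>k=Suc j..Suc r. c k)"
      by (metis sum_up_index_split)
    then show ?thesis by (simp only: sum.shift_bounds_cl_Suc_ivl)
  qed
  ultimately show ?thesis by simp
qed

lemma weighted_one_dimensional_sumset_bound:
  fixes a0 a1 :: real and b c :: "nat \<Rightarrow> real"
  assumes "a0 \<ge> 0" "a1 \<ge> 0" "\<And>k. b k \<ge> 0"
    and "\<forall>k\<le>r. a0 * b k \<le> c k" and "\<forall>k\<le>r. a1 * b k \<le> c (Suc k)"
  shows "(a0 + a1) * (real r + 2) * (\<Sum>k\<le>r. b k) \<le> 2 * (real r + 1) * (\<Sum>k\<le>Suc r. c k)"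
proof -
  define S where "S = (\<Sum>k\<le>r. b k)"
  define Q where "Q = (\<Sum>k\<le>r. (b k)\<^sup>2)"
  define C where "C = (\<Sum>k\<le>Suc r. c k)"
  have "(a0 + a1) * (S\<^sup>2 + Q) = a0 * (2 * (\<Sum>j\<le>r. b j * (\<Sum>k\<le>j. b k)))
      + a1 * (2 * (\<Sum>j\<le>r. b j * (\<Sum>k=j..r. b k)))"
    unfolding S_def Q_def two_times_sum_mult_partial_sums two_times_sum_mult_tail_sums
    by (simp add: algebra_simps)
  also have "\<dots> = 2 * (\<Sum>j\<le>r. b j * (a0 * (\<Sum>k\<le>j. b k) + a1 * (\<Sum>k=j..r. b k)))"
    by (simp add: sum_distrib_left sum.distrib algebra_simps)
  also have "\<dots> \<le> 2 * (\<Sum>j\<le>r. b j * C)"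
    unfolding C_def using assms by (intro mult_left_mono sum_mono prefix_tail_combination_le_sum) auto
  also have "\<dots> = 2 * S * C"
    by (simp add: S_def sum_distrib_right)
  finally have averaged: "(a0 + a1) * (S\<^sup>2 + Q) \<le> 2 * S * C" .
  have "S\<^sup>2 \<le> (real r + 1) * Q"
    using sum_squared_le_sum_of_squares[of b "{..r}"] by (simp add: S_def Q_def algebra_simps)
  then have "(a0 + a1) * S\<^sup>2 \<le> (a0 + a1) * ((real r + 1) * Q)"
    using assms(1,2) by (simp add: mult_left_mono)
  then have "(a0 + a1) * (real r + 2) * S\<^sup>2 \<le> (real r + 1) * ((a0 + a1) * (S\<^sup>2 + Q))"
    by (simp add: algebra_simps)
  also have "\<dots> \<le> (real r + 1) * (2 * S * C)"
    using averaged by (simp add: mult_left_mono)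
  finally have "((a0 + a1) * (real r + 2) * S) * S \<le> (2 * (real r + 1) * C) * S"
    by (simp add: power2_eq_square algebra_simps)
  moreover have "C \<ge> 0"
  proof -
    have "0 \<le> a0 * (\<Sum>k\<le>0. b k) + a1 * (\<Sum>k=0..r. b k)"
      using assms(1-3) by (intro add_nonneg_nonneg mult_nonneg_nonneg sum_nonneg) auto
    also have "\<dots> \<le> C"
      unfolding C_def using assms(4,5) by (rule prefix_tail_combination_le_sum) simp
    finally show ?thesis .
  qed
  moreover have "S \<ge> 0" using assms(3) by (simp add: S_def sum_nonneg)
  ultimately show ?thesis
    unfolding S_def[symmetric] C_def[symmetric]
    by (cases "S = 0") simp_all
qed

definition slice :: "(nat \<Rightarrow> int) set \<Rightarrow> nat \<Rightarrow> int \<Rightarrow> (nat \<Rightarrow> int) set" where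
  "slice X n k = (\<lambda>x. x(n := 0)) ` {x \<in> X. x n = k}"

lemma grid_0: "grid 0 m = {\<lambda>_. 0}"
  by (auto simp: grid_def)

lemma grid_Suc: "grid (Suc n) m = (\<lambda>(x, k). x(n := k)) ` (grid n m \<times> {0..m})"
proof (intro equalityI subsetI)
  fix y assume "y \<in> grid (Suc n) m"
  then have "(y(n := 0), y n) \<in> grid n m \<times> {0..m}" and "y = (y(n := 0))(n := y n)"
    by (auto simp: grid_def)
  then show "y \<in> (\<lambda>(x, k). x(n := k)) ` (grid n m \<times> {0..m})"
    by (metis (no_types, lifting) case_prod_conv image_eqI)
qed (auto simp: grid_def less_Suc_eq)

lemma card_grid: "card (grid n (int p)) = (p + 1) ^ n"
proof (induction n)
  case 0
  then show ?case by (simp add: grid_0)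
next
  case (Suc n)
  have "inj_on (\<lambda>(x, k). x(n := k)) (grid n (int p) \<times> {0..int p})"
  proof (rule inj_onI, clarify)
    fix x y :: "nat \<Rightarrow> int" and k l
    assume "x \<in> grid n (int p)" "y \<in> grid n (int p)" and eq: "x(n := k) = y(n := l)"
    then have "x n = y n" by (simp add: grid_def)
    then have "x = y"
      using eq by (metis fun_upd_triv fun_upd_upd)
    moreover have "k = l" using fun_cong[OF eq, of n] by simp
    ultimately show "x = y \<and> k = l" ..
  qed
  then show ?case
    by (simp add: grid_Suc card_image card_cartesian_product Suc.IH nat_add_distrib)
qed

lemma finite_grid: "finite (grid n (int p))"
  by (rule card_ge_0_finite) (simp add: card_grid)

lemma slice_subset_grid:
  assumes "X \<subseteq> grid (Suc n) m"
  shows "slice X n k \<subseteq> grid n m"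
  using assms by (auto simp: slice_def grid_def)

lemma card_slice: "card (slice X n k) = card {x \<in> X. x n = k}"
  unfolding slice_def
proof (rule card_image, rule inj_onI)
  fix x y assume "x \<in> {x \<in> X. x n = k}" "y \<in> {x \<in> X. x n = k}"
    and eq: "x(n := 0) = y(n := 0)"
  then have "x n = y n" by simp
  show "x = y"
  proof
    fix i show "x i = y i" using fun_cong[OF eq, of i] \<open>x n = y n\<close> by (cases "i = n") auto
  qed
qed

lemma card_eq_sum_card_slices:
  assumes "X \<subseteq> grid (Suc n) (int m)"
  shows "card X = (\<Sum>k\<le>m. card (slice X n (int k)))"
proof -
  have "finite X" using assms finite_grid by (rule finite_subset)
  moreover have "(\<lambda>x. x n) ` X \<subseteq> int ` {..m}"
  proof
    fix v assume "v \<in> (\<lambda>x. x n) ` X"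
    then have "0 \<le> v" "v \<le> int m" using assms by (auto simp: grid_def)
    then show "v \<in> int ` {..m}" by (auto simp: image_iff intro!: bexI[of _ "nat v"])
  qed
  ultimately have "card X = (\<Sum>v\<in>int ` {..m}. card {x \<in> X. x n = v})"
    using sum.group[of X "int ` {..m}" "\<lambda>x. x n" "\<lambda>_. 1::nat"] by simp
  also have "\<dots> = (\<Sum>k\<le>m. card (slice X n (int k)))"
    by (simp add: sum.reindex card_slice)
  finally show ?thesis .
qed

lemma sumset_slice_subset: "sumset (slice A n i) (slice B n j) \<subseteq> slice (sumset A B) n (i + j)"
proof
  fix z assume "z \<in> sumset (slice A n i) (slice B n j)"
  then obtain a b where "a \<in> A" "a n = i" "b \<in> B" "b n = j"
    and z: "z = (\<lambda>l. (a(n := 0)) l + (b(n := 0)) l)"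
    by (auto simp: sumset_def slice_def)
  then have "(\<lambda>l. a l + b l) \<in> {x \<in> sumset A B. x n = i + j}"
    by (auto simp: sumset_def)
  moreover have "z = (\<lambda>l. a l + b l)(n := 0)" using z by auto
  ultimately show "z \<in> slice (sumset A B) n (i + j)"
    unfolding slice_def by blast
qed

lemma sumset_subset_grid:
  assumes "A \<subseteq> grid n p" and "B \<subseteq> grid n q"
  shows "sumset A B \<subseteq> grid n (p + q)"
  using assms by (fastforce simp: sumset_def grid_def intro: add_mono)

lemma card_sumset_lower_bound:
  assumes "A \<subseteq> grid n 1" and "B \<subseteq> grid n (int r)"
  shows "real (card A) * real (card B) * (real r + 2) ^ n
    \<le> real (card (sumset A B)) * (2 ^ n * (real r + 1) ^ n)"
  using assms
proof (induction n arbitrary: A B)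
  case 0
  then have "A \<subseteq> {\<lambda>_. 0}" "B \<subseteq> {\<lambda>_. 0}" by (simp_all add: grid_0)
  then consider "A = {}" | "B = {}" | "A = {\<lambda>_. 0}" "B = {\<lambda>_. 0}" by blast
  then show ?case
  proof cases
    case 3
    moreover have "sumset {\<lambda>_. 0} {\<lambda>_. 0} = {\<lambda>_. 0::int}" by (auto simp: sumset_def)
    ultimately show ?thesis by simp
  qed simp_all
next
  case (Suc n)
  define a where "a i = real (card (slice A n i))" for i
  define b where "b k = real (card (slice B n (int k)))" for k
  define c where "c k = real (card (slice (sumset A B) n (int k)))" for k
  define P where "P = (real r + 2) ^ n"
  define D where "D = 2 ^ n * (real r + 1) ^ n"
  have A_grid: "A \<subseteq> grid (Suc n) (int 1)" and B_grid: "B \<subseteq> grid (Suc n) (int r)"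
    using Suc.prems by simp_all
  have sumset_grid: "sumset A B \<subseteq> grid (Suc n) (int (Suc r))"
    using sumset_subset_grid[OF Suc.prems] by (simp add: add.commute)
  have slices_bound: "a i * b k * P \<le> real (card (slice (sumset A B) n (i + int k))) * D" for i k
  proof -
    have "a i * b k * P \<le> real (card (sumset (slice A n i) (slice B n (int k)))) * D"
      unfolding a_def b_def P_def D_def
      using slice_subset_grid[OF Suc.prems(1)] slice_subset_grid[OF Suc.prems(2)] by (rule Suc.IH)
    also have "\<dots> \<le> real (card (slice (sumset A B) n (i + int k))) * D"
    proof -
      have "finite (slice (sumset A B) n (i + int k))"
        using slice_subset_grid[OF sumset_grid] finite_grid by (rule finite_subset)
      then have "card (sumset (slice A n i) (slice B n (int k)))
          \<le> card (slice (sumset A B) n (i + int k))"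
        using sumset_slice_subset by (rule card_mono)
      then show ?thesis by (simp add: D_def mult_right_mono)
    qed
    finally show ?thesis .
  qed
  have "(a 0 * P + a 1 * P) * (real r + 2) * (\<Sum>k\<le>r. b k)
      \<le> 2 * (real r + 1) * (\<Sum>k\<le>Suc r. c k * D)"
  proof (rule weighted_one_dimensional_sumset_bound)
    show "\<forall>k\<le>r. a 0 * P * b k \<le> c k * D"
      using slices_bound[of 0] by (simp add: c_def mult_ac)
    show "\<forall>k\<le>r. a 1 * P * b k \<le> c (Suc k) * D"
      using slices_bound[of 1] by (simp add: c_def mult_ac add.commute)
  qed (simp_all add: a_def b_def P_def)
  moreover have "real (card A) = a 0 + a 1"
    using card_eq_sum_card_slices[OF A_grid] by (simp add: a_def)
  moreover have "real (card B) = (\<Sum>k\<le>r. b k)"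
    using card_eq_sum_card_slices[OF B_grid] by (simp add: b_def)
  moreover have "real (card (sumset A B)) = (\<Sum>k\<le>Suc r. c k)"
    using card_eq_sum_card_slices[OF sumset_grid] by (simp add: c_def)
  ultimately show ?case
    by (simp add: P_def D_def sum_distrib_right[symmetric] algebra_simps)
qed

theorem proposition3p1:
  fixes r n :: nat and A B :: "(nat \<Rightarrow> int) set"
  assumes "r \<ge> 1" and "n \<ge> 1"
    and "A \<subseteq> grid n 1" and "B \<subseteq> grid n (int r)"
  shows "density (sumset A B) (grid n (int r + 1))
           \<ge> density A (grid n 1) * density B (grid n (int r))"
proof -
  have card_grids: "real (card (grid n 1)) = 2 ^ n" "real (card (grid n (int r))) = (real r + 1) ^ n"
    "real (card (grid n (int r + 1))) = (real r + 2) ^ n"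
    using card_grid[of n 1] card_grid[of n r] card_grid[of n "Suc r"] by (simp_all add: add_ac)
  show ?thesis
    unfolding density_def card_grids
    using card_sumset_lower_bound[OF assms(3,4)] by (simp add: field_simps)
qed

end
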